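(* Let $\mathscr{F}:\mathscr{C}_1\to\mathscr{C}_2$ be a functor that inverts coproducts, and suppose $\mathscr{C}_2$ is extensive. If $\mathcal{F}$ is an extensive presheaf on $\mathscr{C}_1$, then its right Kan extension $\mathscr{F}_*\mathcal{F}$ is an extensive presheaf on $\mathscr{C}_2$.
   Context: All categories are locally small. A functor $\mathscr{F}:\mathscr{C}_1\to\mathscr{C}_2$ inverts coproducts if it is fully faithful and, whenever $\mathscr{F}(X)=\coprod_{i\in I}Z_i$ (a coproduct in $\mathscr{C}_2$) for some object $X$ of $\mathscr{C}_1$, there exist objects $X_i$ of $\mathscr{C}_1$ and isomorphisms $\mathscr{F}(X_i)\to Z_i$. A category is extensive if it has an initial object $\emptyset$, existing binary coproducts are disjoint (the square formed by $\emptyset\to X$, $\emptyset\to Y$ and the coproduct injections into $X\sqcup Y$ is a pullback), and coproducts are stable under pullback: for any existing coproduct $\coprod_iU_i$ and any $f:X\to\coprod_iU_i$, the pullbacks $X\times_{\coprod U_i}U_i$ exist and $X$ is their coproduct via the projections to $X$ (existence of all coproducts is not required). A presheaf on $\mathscr{C}$ is a functor $\mathscr{C}^{op}\to\mathrm{Set}$, with $f^*:=\mathcal{F}(f)$; it is extensive if for every coproduct $X=\coprod_iX_i$ existing in $\mathscr{C}$ the canonical map $\mathcal{F}(X)\to\prod_i\mathcal{F}(X_i)$ induced by the coproduct injections is a bijection. For a presheaf $\mathcal{F}$ on $\mathscr{C}_1$ and an object $Y$ of $\mathscr{C}_2$, let $\mathscr{F}/Y$ be the category of pairs $(X,\psi)$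 with $X\in\mathscr{C}_1$ and $\psi:\mathscr{F}(X)\to Y$, a morphism $(X_1,\psi_1)\to(X_2,\psi_2)$ being $f:X_1\to X_2$ with $\psi_2\circ\mathscr{F}(f)=\psi_1$. Then $(\mathscr{F}_*\mathcal{F})(Y)$ is the set of families $(s_{X,\psi}\in\mathcal{F}(X))_{(X,\psi)\in\mathscr{F}/Y}$ with $f^*s_{X_2,\psi_2}=s_{X_1,\psi_1}$ for every morphism $f$ of $\mathscr{F}/Y$, and $g:Y_1\to Y_2$ acts by $(s_{X,\psi})\mapsto(s_{X,g\circ\phi})_{(X,\phi)\in\mathscr{F}/Y_1}$ (the right Kan extension). *)

theory Defs
  imports Main "HOL-Library.FuncSet"
begin

record ('o, 'm) category =
  Obj :: "'o set"
  Arr :: "'m set"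
  Dom :: "'m \<Rightarrow> 'o"
  Cod :: "'m \<Rightarrow> 'o"
  Cmp :: "'m \<Rightarrow> 'm \<Rightarrow> 'm"
  Idt :: "'o \<Rightarrow> 'm"

definition hom :: "('o, 'm) category \<Rightarrow> 'o \<Rightarrow> 'o \<Rightarrow> 'm set" where
  "hom C X Y = {f \<in> Arr C. Dom C f = X \<and> Cod C f = Y}"

definition is_category :: "('o, 'm) category \<Rightarrow> bool" where
  "is_category C \<longleftrightarrow>
     (\<forall>f \<in> Arr C. Dom C f \<in> Obj C \<and> Cod C f \<in> Obj C) \<and>
     (\<forall>X \<in> Obj C. Idt C X \<in> hom C X X) \<and>
     (\<forall>X Y Z f g. f \<in> hom C X Y \<and> g \<in> hom C Y Z \<longrightarrow> Cmp C g f \<in> hom C X Z) \<and>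
     (\<forall>W X Y Z f g h. f \<in> hom C W X \<and> g \<in> hom C X Y \<and> h \<in> hom C Y Z \<longrightarrow>
        Cmp C h (Cmp C g f) = Cmp C (Cmp C h g) f) \<and>
     (\<forall>X Y f. f \<in> hom C X Y \<longrightarrow> Cmp C f (Idt C X) = f \<and> Cmp C (Idt C Y) f = f)"

definition is_iso :: "('o, 'm) category \<Rightarrow> 'm \<Rightarrow> 'o \<Rightarrow> 'o \<Rightarrow> bool" where
  "is_iso C f X Y \<longleftrightarrow> f \<in> hom C X Y \<and>
     (\<exists>g \<in> hom C Y X. Cmp C g f = Idt C X \<and> Cmp C f g = Idt C Y)"

definition is_functor ::
  "('o1, 'm1) category \<Rightarrow> ('o2, 'm2) category \<Rightarrow> ('o1 \<Rightarrow> 'o2) \<Rightarrow> ('m1 \<Rightarrow> 'm2) \<Rightarrow> bool" where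
  "is_functor C1 C2 Fo Fm \<longleftrightarrow>
     is_category C1 \<and> is_category C2 \<and>
     (\<forall>X \<in> Obj C1. Fo X \<in> Obj C2) \<and>
     (\<forall>X Y f. f \<in> hom C1 X Y \<longrightarrow> Fm f \<in> hom C2 (Fo X) (Fo Y)) \<and>
     (\<forall>X Y Z f g. f \<in> hom C1 X Y \<and> g \<in> hom C1 Y Z \<longrightarrow>
        Fm (Cmp C1 g f) = Cmp C2 (Fm g) (Fm f)) \<and>
     (\<forall>X \<in> Obj C1. Fm (Idt C1 X) = Idt C2 (Fo X))"

definition fully_faithful ::
  "('o1, 'm1) category \<Rightarrow> ('o2, 'm2) category \<Rightarrow> ('o1 \<Rightarrow> 'o2) \<Rightarrow> ('m1 \<Rightarrow> 'm2) \<Rightarrow> bool" where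
  "fully_faithful C1 C2 Fo Fm \<longleftrightarrow>
     (\<forall>X \<in> Obj C1. \<forall>Y \<in> Obj C1. bij_betw Fm (hom C1 X Y) (hom C2 (Fo X) (Fo Y)))"

definition is_coproduct ::
  "('o, 'm) category \<Rightarrow> 'i set \<Rightarrow> ('i \<Rightarrow> 'o) \<Rightarrow> ('i \<Rightarrow> 'm) \<Rightarrow> 'o \<Rightarrow> bool" where
  "is_coproduct C I Z \<iota> U \<longleftrightarrow>
     U \<in> Obj C \<and>
     (\<forall>i \<in> I. Z i \<in> Obj C \<and> \<iota> i \<in> hom C (Z i) U) \<and>
     (\<forall>T \<in> Obj C. \<forall>g. (\<forall>i \<in> I. g i \<in> hom C (Z i) T) \<longrightarrow>
        (\<exists>!h. h \<in> hom C U T \<and> (\<forall>i \<in> I. Cmp C h (\<iota> i) = g i)))"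

definition is_initial :: "('o, 'm) category \<Rightarrow> 'o \<Rightarrow> bool" where
  "is_initial C e \<longleftrightarrow> e \<in> Obj C \<and> (\<forall>T \<in> Obj C. \<exists>!h. h \<in> hom C e T)"

definition is_pullback ::
  "('o, 'm) category \<Rightarrow> 'm \<Rightarrow> 'm \<Rightarrow> 'o \<Rightarrow> 'm \<Rightarrow> 'm \<Rightarrow> bool" where
  "is_pullback C f g P p q \<longleftrightarrow>
     f \<in> Arr C \<and> g \<in> Arr C \<and> Cod C f = Cod C g \<and>
     p \<in> hom C P (Dom C f) \<and> q \<in> hom C P (Dom C g) \<and> Cmp C f p = Cmp C g q \<and>
     (\<forall>T \<in> Obj C. \<forall>u v. u \<in> hom C T (Dom C f) \<and> v \<in> hom C T (Dom C g) \<and>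
        Cmp C f u = Cmp C g v \<longrightarrow>
        (\<exists>!h. h \<in> hom C T P \<and> Cmp C p h = u \<and> Cmp C q h = v))"

definition inverts_coproducts ::
  "'i itself \<Rightarrow> ('o1, 'm1) category \<Rightarrow> ('o2, 'm2) category \<Rightarrow> ('o1 \<Rightarrow> 'o2) \<Rightarrow> ('m1 \<Rightarrow> 'm2) \<Rightarrow> bool" where
  "inverts_coproducts (_ :: 'i itself) C1 C2 Fo Fm \<longleftrightarrow>
     fully_faithful C1 C2 Fo Fm \<and>
     (\<forall>X \<in> Obj C1. \<forall>(I :: 'i set) Z \<iota>. is_coproduct C2 I Z \<iota> (Fo X) \<longrightarrow>
        (\<exists>Xs \<phi>. \<forall>i \<in> I. Xs i \<in> Obj C1 \<and> is_iso C2 (\<phi> i) (Fo (Xs i)) (Z i)))"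

text \<open>Extensive category (coproducts indexed by subsets of the type 'i;
  disjointness is for binary coproducts, indexed by bool).\<close>

definition extensive_cat :: "'i itself \<Rightarrow> ('o, 'm) category \<Rightarrow> bool" where
  "extensive_cat (_ :: 'i itself) C \<longleftrightarrow>
     is_category C \<and>
     (\<exists>e. is_initial C e) \<and>
     (\<forall>X Y U (j :: bool \<Rightarrow> 'm) e a b.
        is_coproduct C UNIV (\<lambda>t. if t then X else Y) j U \<and> is_initial C e \<and>
        a \<in> hom C e X \<and> b \<in> hom C e Y \<longrightarrow> is_pullback C (j True) (j False) e a b) \<and>
     (\<forall>(I :: 'i set) Us \<iota> U X f.
        is_coproduct C I Us \<iota> U \<and> f \<in> hom C X U \<longrightarrow>
        (\<forall>i \<in> I. \<exists>P p q. is_pullback C f (\<iota> i) P p q) \<and>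
        (\<forall>P p q. (\<forall>i \<in> I. is_pullback C f (\<iota> i) (P i) (p i) (q i)) \<longrightarrow>
           is_coproduct C I P p X))"

definition is_presheaf :: "('o, 'm) category \<Rightarrow> ('o \<Rightarrow> 'v set) \<Rightarrow> ('m \<Rightarrow> 'v \<Rightarrow> 'v) \<Rightarrow> bool" where
  "is_presheaf C Fp res \<longleftrightarrow>
     (\<forall>X Y f. f \<in> hom C X Y \<longrightarrow> res f \<in> Fp Y \<rightarrow> Fp X) \<and>
     (\<forall>X \<in> Obj C. \<forall>s \<in> Fp X. res (Idt C X) s = s) \<and>
     (\<forall>X Y Z f g s. f \<in> hom C X Y \<and> g \<in> hom C Y Z \<and> s \<in> Fp Z \<longrightarrow>
        res (Cmp C g f) s = res f (res g s))"

definition extensive_presheaf ::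
  "'i itself \<Rightarrow> ('o, 'm) category \<Rightarrow> ('o \<Rightarrow> 'v set) \<Rightarrow> ('m \<Rightarrow> 'v \<Rightarrow> 'v) \<Rightarrow> bool" where
  "extensive_presheaf (_ :: 'i itself) C Fp res \<longleftrightarrow>
     is_presheaf C Fp res \<and>
     (\<forall>(I :: 'i set) Xs \<iota> X. is_coproduct C I Xs \<iota> X \<longrightarrow>
        bij_betw (\<lambda>s. \<lambda>i \<in> I. res (\<iota> i) s) (Fp X) (\<Pi>\<^sub>E i \<in> I. Fp (Xs i)))"

definition comma_objs ::
  "('o1, 'm1) category \<Rightarrow> ('o2, 'm2) category \<Rightarrow> ('o1 \<Rightarrow> 'o2) \<Rightarrow> 'o2 \<Rightarrow> ('o1 \<times> 'm2) set" where
  "comma_objs C1 C2 Fo Y = {(X, \<psi>). X \<in> Obj C1 \<and> \<psi> \<in> hom C2 (Fo X) Y}"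

definition ran_obj ::
  "('o1, 'm1) category \<Rightarrow> ('o2, 'm2) category \<Rightarrow> ('o1 \<Rightarrow> 'o2) \<Rightarrow> ('m1 \<Rightarrow> 'm2) \<Rightarrow>
   ('o1 \<Rightarrow> 'v set) \<Rightarrow> ('m1 \<Rightarrow> 'v \<Rightarrow> 'v) \<Rightarrow> 'o2 \<Rightarrow> ('o1 \<times> 'm2 \<Rightarrow> 'v) set" where
  "ran_obj C1 C2 Fo Fm Fp res Y =
     {s \<in> extensional (comma_objs C1 C2 Fo Y).
        (\<forall>(X, \<psi>) \<in> comma_objs C1 C2 Fo Y. s (X, \<psi>) \<in> Fp X) \<and>
        (\<forall>X1 \<psi>1 X2 \<psi>2 f. (X1, \<psi>1) \<in> comma_objs C1 C2 Fo Y \<and> (X2, \<psi>2) \<in> comma_objs C1 C2 Fo Y \<and>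
           f \<in> hom C1 X1 X2 \<and> Cmp C2 \<psi>2 (Fm f) = \<psi>1 \<longrightarrow>
           res f (s (X2, \<psi>2)) = s (X1, \<psi>1))}"

definition ran_res ::
  "('o1, 'm1) category \<Rightarrow> ('o2, 'm2) category \<Rightarrow> ('o1 \<Rightarrow> 'o2) \<Rightarrow>
   'm2 \<Rightarrow> ('o1 \<times> 'm2 \<Rightarrow> 'v) \<Rightarrow> ('o1 \<times> 'm2 \<Rightarrow> 'v)" where
  "ran_res C1 C2 Fo g s = (\<lambda>(X, \<phi>) \<in> comma_objs C1 C2 Fo (Dom C2 g). s (X, Cmp C2 g \<phi>))"

end

theory Submission
  imports Defs
begin

text \<open>
  A section s of F_* F over Y is a compatible choice of values s(X, psi) in F(X), one for each
  psi : F X -> Y. Let Y be the coproduct of the Y_i. By extensivity of C_2 the pullbacks of psi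
  along the injections exhibit F X as their coproduct; since F inverts coproducts and is fully
  faithful, this is the image of a coproduct decomposition of X into objects X_i of C_1, whose
  F-images sit in pullback squares over the Y_i. As the presheaf F is extensive, s(X, psi) is thus
  determined by its restrictions to the X_i, which are values of the restrictions of s to the Y_i.
  Conversely, any family of sections over the Y_i prescribes such restrictions for every (X, psi);
  the elements they glue to are compatible and form a section over Y.
\<close>

section \<open>Coproducts, pullbacks and isomorphisms\<close>

lemma comp_in_hom: "is_category C \<Longrightarrow> f \<in> hom C X Y \<Longrightarrow> g \<in> hom C Y Z \<Longrightarrow> Cmp C g f \<in> hom C X Z"
  unfolding is_category_def by blast

lemma comp_assoc:
  "is_category C \<Longrightarrow> f \<in> hom C W X \<Longrightarrow> g \<in> hom C X Y \<Longrightarrow> h \<in> hom C Y Z \<Longrightarrow>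
   Cmp C h (Cmp C g f) = Cmp C (Cmp C h g) f"
  unfolding is_category_def by blast

lemma id_in_hom: "is_category C \<Longrightarrow> X \<in> Obj C \<Longrightarrow> Idt C X \<in> hom C X X"
  unfolding is_category_def by blast

lemma comp_id_left: "is_category C \<Longrightarrow> f \<in> hom C X Y \<Longrightarrow> Cmp C (Idt C Y) f = f"
  unfolding is_category_def by blast

lemma comp_id_right: "is_category C \<Longrightarrow> f \<in> hom C X Y \<Longrightarrow> Cmp C f (Idt C X) = f"
  unfolding is_category_def by blast

lemma hom_objs: "is_category C \<Longrightarrow> f \<in> hom C X Y \<Longrightarrow> X \<in> Obj C \<and> Y \<in> Obj C"
  unfolding is_category_def hom_def by blast

lemma is_isoE:
  assumes "is_iso C \<phi> X Y"
  obtains \<phi>' where "\<phi> \<in> hom C X Y" "\<phi>' \<in> hom C Y X"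
    "Cmp C \<phi>' \<phi> = Idt C X" "Cmp C \<phi> \<phi>' = Idt C Y"
  using assms unfolding is_iso_def by blast

lemma functor_obj: "is_functor C1 C2 Fo Fm \<Longrightarrow> X \<in> Obj C1 \<Longrightarrow> Fo X \<in> Obj C2"
  unfolding is_functor_def by blast

lemma functor_hom: "is_functor C1 C2 Fo Fm \<Longrightarrow> f \<in> hom C1 X Y \<Longrightarrow> Fm f \<in> hom C2 (Fo X) (Fo Y)"
  unfolding is_functor_def by blast

lemma functor_comp:
  "is_functor C1 C2 Fo Fm \<Longrightarrow> f \<in> hom C1 X Y \<Longrightarrow> g \<in> hom C1 Y Z \<Longrightarrow>
   Fm (Cmp C1 g f) = Cmp C2 (Fm g) (Fm f)"
  unfolding is_functor_def by blast

lemma functor_id: "is_functor C1 C2 Fo Fm \<Longrightarrow> X \<in> Obj C1 \<Longrightarrow> Fm (Idt C1 X) = Idt C2 (Fo X)"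
  unfolding is_functor_def by blast

lemma functor_categories: "is_functor C1 C2 Fo Fm \<Longrightarrow> is_category C1 \<and> is_category C2"
  unfolding is_functor_def by blast

lemma fully_faithful_full:
  "fully_faithful C1 C2 Fo Fm \<Longrightarrow> X \<in> Obj C1 \<Longrightarrow> Y \<in> Obj C1 \<Longrightarrow> h \<in> hom C2 (Fo X) (Fo Y) \<Longrightarrow>
   \<exists>f \<in> hom C1 X Y. Fm f = h"
  unfolding fully_faithful_def bij_betw_def by (metis imageE)

lemma fully_faithful_faithful:
  assumes "fully_faithful C1 C2 Fo Fm" "is_category C1" "f \<in> hom C1 X Y" "g \<in> hom C1 X Y"
    and "Fm f = Fm g"
  shows "f = g"
proof -
  have "inj_on Fm (hom C1 X Y)"
    using assms(1) hom_objs[OF assms(2,3)] unfolding fully_faithful_def bij_betw_def by blast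
  then show ?thesis using assms(3-5) by (blast dest: inj_onD)
qed

lemma coproduct_inj:
  "is_coproduct C I Z \<iota> U \<Longrightarrow> i \<in> I \<Longrightarrow> \<iota> i \<in> hom C (Z i) U"
  unfolding is_coproduct_def by blast

lemma coproduct_universal:
  "is_coproduct C I Z \<iota> U \<Longrightarrow> T \<in> Obj C \<Longrightarrow> (\<And>i. i \<in> I \<Longrightarrow> g i \<in> hom C (Z i) T) \<Longrightarrow>
   \<exists>!h. h \<in> hom C U T \<and> (\<forall>i \<in> I. Cmp C h (\<iota> i) = g i)"
  unfolding is_coproduct_def by blast

lemma comp_inverse_right_eq:
  assumes C: "is_category C" and \<phi>: "\<phi> \<in> hom C Q P" "\<phi>' \<in> hom C P Q"
    "Cmp C \<phi>' \<phi> = Idt C Q" "Cmp C \<phi> \<phi>' = Idt C P"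
    and x: "x \<in> hom C P T" and y: "y \<in> hom C Q T"
  shows "Cmp C x \<phi> = y \<longleftrightarrow> x = Cmp C y \<phi>'"
proof
  assume "Cmp C x \<phi> = y"
  then show "x = Cmp C y \<phi>'"
    using comp_assoc[OF C \<phi>(2,1) x] \<phi>(4) comp_id_right[OF C x] by simp
next
  assume "x = Cmp C y \<phi>'"
  then show "Cmp C x \<phi> = y"
    using comp_assoc[OF C \<phi>(1,2) y] \<phi>(3) comp_id_right[OF C y] by simp
qed

lemma comp_inverse_left_eq:
  assumes C: "is_category C" and \<phi>: "\<phi> \<in> hom C Q P" "\<phi>' \<in> hom C P Q"
    "Cmp C \<phi>' \<phi> = Idt C Q" "Cmp C \<phi> \<phi>' = Idt C P"
    and x: "x \<in> hom C T Q" and y: "y \<in> hom C T P"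
  shows "Cmp C \<phi> x = y \<longleftrightarrow> x = Cmp C \<phi>' y"
proof
  assume "Cmp C \<phi> x = y"
  then show "x = Cmp C \<phi>' y"
    using comp_assoc[OF C x \<phi>(1,2)] \<phi>(3) comp_id_left[OF C x] by simp
next
  assume "x = Cmp C \<phi>' y"
  then show "Cmp C \<phi> x = y"
    using comp_assoc[OF C y \<phi>(2,1)] \<phi>(4) comp_id_left[OF C y] by simp
qed

lemma is_coproduct_cong:
  assumes "is_coproduct C I Z \<iota> U" "\<And>i. i \<in> I \<Longrightarrow> \<iota> i = \<iota>' i"
  shows "is_coproduct C I Z \<iota>' U"
  using assms unfolding is_coproduct_def by (simp cong: conj_cong)

lemma coproduct_isoI:
  assumes C: "is_category C" and cop: "is_coproduct C I P p U"
    and iso: "\<And>i. i \<in> I \<Longrightarrow> is_iso C (\<phi> i) (Q i) (P i)"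
  shows "is_coproduct C I Q (\<lambda>i. Cmp C (p i) (\<phi> i)) U"
proof -
  have "\<forall>i \<in> I. \<exists>\<chi>. \<phi> i \<in> hom C (Q i) (P i) \<and> \<chi> \<in> hom C (P i) (Q i) \<and>
      Cmp C \<chi> (\<phi> i) = Idt C (Q i) \<and> Cmp C (\<phi> i) \<chi> = Idt C (P i)"
    using iso unfolding is_iso_def by blast
  from bchoice[OF this] obtain \<phi>' where \<phi>: "\<And>i. i \<in> I \<Longrightarrow> \<phi> i \<in> hom C (Q i) (P i) \<and>
      \<phi>' i \<in> hom C (P i) (Q i) \<and> Cmp C (\<phi>' i) (\<phi> i) = Idt C (Q i) \<and> Cmp C (\<phi> i) (\<phi>' i) = Idt C (P i)"
    by blast
  have p: "\<And>i. i \<in> I \<Longrightarrow> p i \<in> hom C (P i) U"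
    using coproduct_inj[OF cop] .
  show ?thesis
    unfolding is_coproduct_def
  proof (intro conjI ballI allI impI)
    show "U \<in> Obj C" using cop unfolding is_coproduct_def by blast
  next
    fix i assume "i \<in> I"
    then show "Q i \<in> Obj C" "Cmp C (p i) (\<phi> i) \<in> hom C (Q i) U"
      using \<phi> p comp_in_hom[OF C] hom_objs[OF C] by blast+
  next
    fix T g assume T: "T \<in> Obj C" and g: "\<forall>i \<in> I. g i \<in> hom C (Q i) T"
    have iff: "h \<in> hom C U T \<and> (\<forall>i \<in> I. Cmp C h (Cmp C (p i) (\<phi> i)) = g i) \<longleftrightarrow>
        h \<in> hom C U T \<and> (\<forall>i \<in> I. Cmp C h (p i) = Cmp C (g i) (\<phi>' i))" for h
    proof -
      have "Cmp C h (Cmp C (p i) (\<phi> i)) = g i \<longleftrightarrow> Cmp C h (p i) = Cmp C (g i) (\<phi>' i)"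
        if h: "h \<in> hom C U T" and i: "i \<in> I" for i
      proof -
        have \<phi>i: "\<phi> i \<in> hom C (Q i) (P i)" "\<phi>' i \<in> hom C (P i) (Q i)"
          "Cmp C (\<phi>' i) (\<phi> i) = Idt C (Q i)" "Cmp C (\<phi> i) (\<phi>' i) = Idt C (P i)"
          using \<phi>[OF i] by blast+
        show ?thesis
          using comp_assoc[OF C \<phi>i(1) p[OF i] h] g i
            comp_inverse_right_eq[OF C \<phi>i comp_in_hom[OF C p[OF i] h]] by auto
      qed
      then show ?thesis by blast
    qed
    show "\<exists>!h. h \<in> hom C U T \<and> (\<forall>i \<in> I. Cmp C h (Cmp C (p i) (\<phi> i)) = g i)"
      unfolding iff
      by (rule coproduct_universal[OF cop T]) (use \<phi> g comp_in_hom[OF C] in blast)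
  qed
qed

lemma ex1_hom_comp_iso:
  assumes C: "is_category C" and iso: "is_iso C \<phi> Q P"
    and ex1: "\<exists>!h. h \<in> hom C T P \<and> R h"
  shows "\<exists>!k. k \<in> hom C T Q \<and> R (Cmp C \<phi> k)"
proof -
  obtain \<phi>' where \<phi>: "\<phi> \<in> hom C Q P" "\<phi>' \<in> hom C P Q"
    "Cmp C \<phi>' \<phi> = Idt C Q" "Cmp C \<phi> \<phi>' = Idt C P"
    using iso by (rule is_isoE)
  obtain h where h: "h \<in> hom C T P" "R h" and unique: "\<And>h'. h' \<in> hom C T P \<Longrightarrow> R h' \<Longrightarrow> h' = h"
    using ex1 by blast
  show ?thesis
  proof (rule ex1I[of _ "Cmp C \<phi>' h"])
    have "Cmp C \<phi> (Cmp C \<phi>' h) = h"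
      using comp_inverse_left_eq[OF C \<phi> comp_in_hom[OF C h(1) \<phi>(2)] h(1)] by simp
    then show "Cmp C \<phi>' h \<in> hom C T Q \<and> R (Cmp C \<phi> (Cmp C \<phi>' h))"
      using comp_in_hom[OF C h(1) \<phi>(2)] h(2) by simp
  next
    fix k assume k: "k \<in> hom C T Q \<and> R (Cmp C \<phi> k)"
    then have "Cmp C \<phi> k = h"
      using unique comp_in_hom[OF C _ \<phi>(1)] by blast
    then show "k = Cmp C \<phi>' h"
      using comp_inverse_left_eq[OF C \<phi> _ h(1)] k by blast
  qed
qed

lemma pullback_isoI:
  assumes C: "is_category C" and pb: "is_pullback C f g P p q" and iso: "is_iso C \<phi> Q P"
  shows "is_pullback C f g Q (Cmp C p \<phi>) (Cmp C q \<phi>)"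
  unfolding is_pullback_def
proof (intro conjI ballI allI impI)
  define A B Z where "A = Dom C f" and "B = Dom C g" and "Z = Cod C f"
  have \<phi>: "\<phi> \<in> hom C Q P" using iso unfolding is_iso_def by blast
  have f: "f \<in> hom C A Z" and g: "g \<in> hom C B Z" and p: "p \<in> hom C P A" and q: "q \<in> hom C P B"
    and sq: "Cmp C f p = Cmp C g q"
    using pb unfolding is_pullback_def A_def B_def Z_def hom_def by auto
  show "f \<in> Arr C" "g \<in> Arr C" "Cod C f = Cod C g"
    using pb unfolding is_pullback_def by blast+
  show "Cmp C p \<phi> \<in> hom C Q (Dom C f)" "Cmp C q \<phi> \<in> hom C Q (Dom C g)"
    using comp_in_hom[OF C \<phi> p] comp_in_hom[OF C \<phi> q] unfolding A_def B_def .
  show "Cmp C f (Cmp C p \<phi>) = Cmp C g (Cmp C q \<phi>)"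
    using comp_assoc[OF C \<phi> p f] comp_assoc[OF C \<phi> q g] sq by simp
  fix T u v
  assume T: "T \<in> Obj C"
    and uv: "u \<in> hom C T (Dom C f) \<and> v \<in> hom C T (Dom C g) \<and> Cmp C f u = Cmp C g v"
  have "\<exists>!h. h \<in> hom C T P \<and> Cmp C p h = u \<and> Cmp C q h = v"
    using pb T uv unfolding is_pullback_def by blast
  then have "\<exists>!k. k \<in> hom C T Q \<and> Cmp C p (Cmp C \<phi> k) = u \<and> Cmp C q (Cmp C \<phi> k) = v"
    by (rule ex1_hom_comp_iso[OF C iso])
  moreover have "k \<in> hom C T Q \<and> Cmp C (Cmp C p \<phi>) k = u \<and> Cmp C (Cmp C q \<phi>) k = v \<longleftrightarrow>
      k \<in> hom C T Q \<and> Cmp C p (Cmp C \<phi> k) = u \<and> Cmp C q (Cmp C \<phi> k) = v" for k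
    using comp_assoc[OF C _ \<phi> p, of k T] comp_assoc[OF C _ \<phi> q, of k T] by auto
  ultimately show "\<exists>!k. k \<in> hom C T Q \<and> Cmp C (Cmp C p \<phi>) k = u \<and> Cmp C (Cmp C q \<phi>) k = v"
    by simp
qed

lemma fully_faithful_reflects_coproduct:
  assumes F: "is_functor C1 C2 Fo Fm" and ff: "fully_faithful C1 C2 Fo Fm"
    and X: "X \<in> Obj C1" and e: "\<And>i. i \<in> I \<Longrightarrow> e i \<in> hom C1 (Xs i) X"
    and cop: "is_coproduct C2 I (\<lambda>i. Fo (Xs i)) (\<lambda>i. Fm (e i)) (Fo X)"
  shows "is_coproduct C1 I Xs e X"
  unfolding is_coproduct_def
proof (intro conjI ballI allI impI)
  have C1_category: "is_category C1" using functor_categories[OF F] by blast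
  show "X \<in> Obj C1" by (rule X)
  show "Xs i \<in> Obj C1" "e i \<in> hom C1 (Xs i) X" if "i \<in> I" for i
    using e[OF that] hom_objs[OF C1_category] by blast+
  fix T g assume T: "T \<in> Obj C1" and g: "\<forall>i \<in> I. g i \<in> hom C1 (Xs i) T"
  have iff: "(\<forall>i \<in> I. Cmp C1 h (e i) = g i) \<longleftrightarrow> (\<forall>i \<in> I. Cmp C2 (Fm h) (Fm (e i)) = Fm (g i))"
    if h: "h \<in> hom C1 X T" for h
  proof -
    have "Cmp C1 h (e i) = g i \<longleftrightarrow> Cmp C2 (Fm h) (Fm (e i)) = Fm (g i)" if i: "i \<in> I" for i
      using functor_comp[OF F e[OF i] h] g i
        fully_faithful_faithful[OF ff C1_category comp_in_hom[OF C1_category e[OF i] h], of "g i"] by auto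
    then show ?thesis by blast
  qed
  have "\<exists>!H. H \<in> hom C2 (Fo X) (Fo T) \<and> (\<forall>i \<in> I. Cmp C2 H (Fm (e i)) = Fm (g i))"
    by (rule coproduct_universal[OF cop functor_obj[OF F T]]) (use g functor_hom[OF F] in blast)
  then obtain H where H: "H \<in> hom C2 (Fo X) (Fo T)" "\<forall>i \<in> I. Cmp C2 H (Fm (e i)) = Fm (g i)"
    and unique: "\<And>H'. H' \<in> hom C2 (Fo X) (Fo T) \<Longrightarrow> \<forall>i \<in> I. Cmp C2 H' (Fm (e i)) = Fm (g i) \<Longrightarrow> H' = H"
    by blast
  obtain h where h: "h \<in> hom C1 X T" "Fm h = H"
    using fully_faithful_full[OF ff X T H(1)] by blast
  show "\<exists>!h. h \<in> hom C1 X T \<and> (\<forall>i \<in> I. Cmp C1 h (e i) = g i)"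
  proof (rule ex1I[of _ h])
    show "h \<in> hom C1 X T \<and> (\<forall>i \<in> I. Cmp C1 h (e i) = g i)"
      using iff[OF h(1)] h H by simp
  next
    fix h' assume "h' \<in> hom C1 X T \<and> (\<forall>i \<in> I. Cmp C1 h' (e i) = g i)"
    then have h': "h' \<in> hom C1 X T" and "Fm h' = H"
      using iff unique functor_hom[OF F] by blast+
    then show "h' = h"
      using fully_faithful_faithful[OF ff C1_category h' h(1)] h(2) by simp
  qed
qed

lemma is_pullbackD:
  assumes "is_pullback C f g P p q" "f \<in> hom C A Z" "g \<in> hom C B Z"
  shows "p \<in> hom C P A" "q \<in> hom C P B" "Cmp C f p = Cmp C g q"
    and "\<And>T u v. T \<in> Obj C \<Longrightarrow> u \<in> hom C T A \<Longrightarrow> v \<in> hom C T B \<Longrightarrow> Cmp C f u = Cmp C g v \<Longrightarrow>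
      \<exists>h \<in> hom C T P. Cmp C p h = u \<and> Cmp C q h = v"
proof -
  have "Dom C f = A" "Dom C g = B" using assms(2,3) by (simp_all add: hom_def)
  then have pb: "p \<in> hom C P A \<and> q \<in> hom C P B \<and> Cmp C f p = Cmp C g q \<and>
      (\<forall>T \<in> Obj C. \<forall>u v. u \<in> hom C T A \<and> v \<in> hom C T B \<and> Cmp C f u = Cmp C g v \<longrightarrow>
        (\<exists>!h. h \<in> hom C T P \<and> Cmp C p h = u \<and> Cmp C q h = v))"
    using assms(1) unfolding is_pullback_def by simp
  then show "p \<in> hom C P A" "q \<in> hom C P B" "Cmp C f p = Cmp C g q" by simp_all
  fix T u v assume "T \<in> Obj C" "u \<in> hom C T A" "v \<in> hom C T B" "Cmp C f u = Cmp C g v"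
  then show "\<exists>h \<in> hom C T P. Cmp C p h = u \<and> Cmp C q h = v" using pb by blast
qed

section \<open>Decomposing along a coproduct in an extensive category\<close>

lemma extensive_cat_pullbacksE:
  fixes ty :: "'i itself" and I :: "'i set"
  assumes "extensive_cat ty C" "is_coproduct C I Us \<iota> U" "f \<in> hom C X U"
  obtains P p q where "\<And>i. i \<in> I \<Longrightarrow> is_pullback C f (\<iota> i) (P i) (p i) (q i)"
proof -
  have "\<forall>i \<in> I. \<exists>P p q. is_pullback C f (\<iota> i) P p q"
    using assms unfolding extensive_cat_def by blast
  then have "\<forall>i \<in> I. \<exists>t. is_pullback C f (\<iota> i) (fst t) (fst (snd t)) (snd (snd t))"
    by auto
  from bchoice[OF this] obtain t
    where "\<forall>i \<in> I. is_pullback C f (\<iota> i) (fst (t i)) (fst (snd (t i))) (snd (snd (t i)))" ..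
  then show thesis
    by (intro that[of "\<lambda>i. fst (t i)" "\<lambda>i. fst (snd (t i))" "\<lambda>i. snd (snd (t i))"]) blast
qed

lemma extensive_cat_pullback_coproduct:
  fixes ty :: "'i itself" and I :: "'i set"
  assumes "extensive_cat ty C" "is_coproduct C I Us \<iota> U" "f \<in> hom C X U"
    and "\<And>i. i \<in> I \<Longrightarrow> is_pullback C f (\<iota> i) (P i) (p i) (q i)"
  shows "is_coproduct C I P p X"
  using assms unfolding extensive_cat_def by blast

lemma inverts_coproductsE:
  fixes ty :: "'i itself" and I :: "'i set"
  assumes "inverts_coproducts ty C1 C2 Fo Fm" "X \<in> Obj C1" "is_coproduct C2 I Z \<iota> (Fo X)"
  obtains Xs \<phi> where "\<And>i. i \<in> I \<Longrightarrow> Xs i \<in> Obj C1 \<and> is_iso C2 (\<phi> i) (Fo (Xs i)) (Z i)"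
  using assms unfolding inverts_coproducts_def by blast

lemma extensive_pullback_decomposition:
  fixes ty :: "'i itself" and I :: "'i set"
  assumes F: "is_functor C1 C2 Fo Fm" and inv: "inverts_coproducts ty C1 C2 Fo Fm"
    and ext: "extensive_cat ty C2" and cop: "is_coproduct C2 I Ys \<iota> Y"
    and X: "X \<in> Obj C1" and \<psi>: "\<psi> \<in> hom C2 (Fo X) Y"
  obtains Xs e r where "is_coproduct C1 I Xs e X"
    and "\<And>i. i \<in> I \<Longrightarrow> is_pullback C2 \<psi> (\<iota> i) (Fo (Xs i)) (Fm (e i)) (r i)"
proof -
  have C2_category: "is_category C2" using functor_categories[OF F] by blast
  have ff: "fully_faithful C1 C2 Fo Fm" using inv unfolding inverts_coproducts_def by blast
  obtain P p q where pb: "\<And>i. i \<in> I \<Longrightarrow> is_pullback C2 \<psi> (\<iota> i) (P i) (p i) (q i)"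
    using extensive_cat_pullbacksE[OF ext cop \<psi>] by blast
  have copP: "is_coproduct C2 I P p (Fo X)"
    using extensive_cat_pullback_coproduct[OF ext cop \<psi> pb] .
  obtain Xs \<phi> where iso: "\<And>i. i \<in> I \<Longrightarrow> Xs i \<in> Obj C1 \<and> is_iso C2 (\<phi> i) (Fo (Xs i)) (P i)"
    using inverts_coproductsE[OF inv X copP] by blast
  have "\<forall>i \<in> I. \<exists>\<epsilon>. \<epsilon> \<in> hom C1 (Xs i) X \<and> Fm \<epsilon> = Cmp C2 (p i) (\<phi> i)"
  proof
    fix i assume i: "i \<in> I"
    have Xi: "Xs i \<in> Obj C1" and \<phi>i: "\<phi> i \<in> hom C2 (Fo (Xs i)) (P i)"
      using iso[OF i] unfolding is_iso_def by blast+
    have "Cmp C2 (p i) (\<phi> i) \<in> hom C2 (Fo (Xs i)) (Fo X)"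
      using comp_in_hom[OF C2_category \<phi>i coproduct_inj[OF copP i]] .
    then show "\<exists>\<epsilon>. \<epsilon> \<in> hom C1 (Xs i) X \<and> Fm \<epsilon> = Cmp C2 (p i) (\<phi> i)"
      using fully_faithful_full[OF ff Xi X] by blast
  qed
  from bchoice[OF this]
  obtain e where e: "\<And>i. i \<in> I \<Longrightarrow> e i \<in> hom C1 (Xs i) X \<and> Fm (e i) = Cmp C2 (p i) (\<phi> i)"
    by blast
  have "is_coproduct C2 I (\<lambda>i. Fo (Xs i)) (\<lambda>i. Cmp C2 (p i) (\<phi> i)) (Fo X)"
    by (rule coproduct_isoI[OF C2_category copP]) (use iso in blast)
  then have copF: "is_coproduct C2 I (\<lambda>i. Fo (Xs i)) (\<lambda>i. Fm (e i)) (Fo X)"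
    by (rule is_coproduct_cong) (use e in simp)
  have "is_coproduct C1 I Xs e X"
    by (rule fully_faithful_reflects_coproduct[OF F ff X _ copF]) (use e in blast)
  moreover have "is_pullback C2 \<psi> (\<iota> i) (Fo (Xs i)) (Fm (e i)) (Cmp C2 (q i) (\<phi> i))" if "i \<in> I" for i
    using pullback_isoI[OF C2_category pb[OF that] conjunct2[OF iso[OF that]]] e[OF that] by simp
  ultimately show ?thesis by (rule that)
qed

lemma fully_faithful_pullback_factor:
  assumes F: "is_functor C1 C2 Fo Fm" and ff: "fully_faithful C1 C2 Fo Fm"
    and pb: "is_pullback C2 \<psi> \<iota> (Fo X') (Fm e) r"
    and \<psi>: "\<psi> \<in> hom C2 (Fo X) Y" and \<iota>: "\<iota> \<in> hom C2 Y' Y" and e: "e \<in> hom C1 X' X"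
    and A: "A \<in> Obj C1" and \<rho>: "\<rho> \<in> hom C2 (Fo A) Y'" and g: "g \<in> hom C1 A X"
    and sq: "Cmp C2 \<psi> (Fm g) = Cmp C2 \<iota> \<rho>"
  obtains k where "k \<in> hom C1 A X'" "g = Cmp C1 e k" "Cmp C2 r (Fm k) = \<rho>"
proof -
  have C1_category: "is_category C1" using functor_categories[OF F] by blast
  obtain h where h: "h \<in> hom C2 (Fo A) (Fo X')" "Cmp C2 (Fm e) h = Fm g" "Cmp C2 r h = \<rho>"
    using is_pullbackD(4)[OF pb \<psi> \<iota> functor_obj[OF F A] functor_hom[OF F g] \<rho> sq] by blast
  obtain k where k: "k \<in> hom C1 A X'" "Fm k = h"
    using fully_faithful_full[OF ff A conjunct1[OF hom_objs[OF C1_category e]] h(1)] by blast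
  have "Fm (Cmp C1 e k) = Fm g"
    using functor_comp[OF F k(1) e] k(2) h(2) by simp
  then have "g = Cmp C1 e k"
    using fully_faithful_faithful[OF ff C1_category comp_in_hom[OF C1_category k(1) e] g] by simp
  then show thesis using that k h(3) by blast
qed

section \<open>The right Kan extension and its extensivity\<close>

lemma presheaf_res_in: "is_presheaf C Fp res \<Longrightarrow> f \<in> hom C X Y \<Longrightarrow> s \<in> Fp Y \<Longrightarrow> res f s \<in> Fp X"
  unfolding is_presheaf_def by blast

lemma presheaf_res_id: "is_presheaf C Fp res \<Longrightarrow> X \<in> Obj C \<Longrightarrow> s \<in> Fp X \<Longrightarrow> res (Idt C X) s = s"
  unfolding is_presheaf_def by blast

lemma presheaf_res_comp:
  "is_presheaf C Fp res \<Longrightarrow> f \<in> hom C X Y \<Longrightarrow> g \<in> hom C Y Z \<Longrightarrow> s \<in> Fp Z \<Longrightarrow>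
   res (Cmp C g f) s = res f (res g s)"
  unfolding is_presheaf_def by blast

lemma extensive_presheaf_bij:
  fixes ty :: "'i itself" and I :: "'i set"
  shows "extensive_presheaf ty C Fp res \<Longrightarrow> is_coproduct C I Xs \<iota> X \<Longrightarrow>
    bij_betw (\<lambda>s. \<lambda>i \<in> I. res (\<iota> i) s) (Fp X) (\<Pi>\<^sub>E i \<in> I. Fp (Xs i))"
  unfolding extensive_presheaf_def by blast

locale kan_extension =
  fixes C1 :: "('o1, 'm1) category" and C2 :: "('o2, 'm2) category"
    and Fo :: "'o1 \<Rightarrow> 'o2" and Fm :: "'m1 \<Rightarrow> 'm2"
    and Fp :: "'o1 \<Rightarrow> 'v set" and res :: "'m1 \<Rightarrow> 'v \<Rightarrow> 'v"
  assumes F_functor: "is_functor C1 C2 Fo Fm"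
begin

abbreviation "Comma \<equiv> comma_objs C1 C2 Fo"
abbreviation "Ran \<equiv> ran_obj C1 C2 Fo Fm Fp res"
abbreviation "Ran_res \<equiv> ran_res C1 C2 Fo"

lemma C2_category: "is_category C2"
  using functor_categories[OF F_functor] by blast

lemma comma_objs_iff: "(X, \<psi>) \<in> Comma Y \<longleftrightarrow> X \<in> Obj C1 \<and> \<psi> \<in> hom C2 (Fo X) Y"
  by (simp add: comma_objs_def)

lemma ran_obj_value:
  "s \<in> Ran Y \<Longrightarrow> X \<in> Obj C1 \<Longrightarrow> \<psi> \<in> hom C2 (Fo X) Y \<Longrightarrow> s (X, \<psi>) \<in> Fp X"
  unfolding ran_obj_def comma_objs_def by blast

lemma ran_obj_compatible:
  "s \<in> Ran Y \<Longrightarrow> X1 \<in> Obj C1 \<Longrightarrow> X2 \<in> Obj C1 \<Longrightarrow>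
   \<psi>2 \<in> hom C2 (Fo X2) Y \<Longrightarrow> f \<in> hom C1 X1 X2 \<Longrightarrow> Cmp C2 \<psi>2 (Fm f) \<in> hom C2 (Fo X1) Y \<Longrightarrow>
   res f (s (X2, \<psi>2)) = s (X1, Cmp C2 \<psi>2 (Fm f))"
  unfolding ran_obj_def comma_objs_def by blast

lemma ran_obj_eqI:
  assumes "s \<in> Ran Y" "t \<in> Ran Y"
    and "\<And>X \<psi>. X \<in> Obj C1 \<Longrightarrow> \<psi> \<in> hom C2 (Fo X) Y \<Longrightarrow> s (X, \<psi>) = t (X, \<psi>)"
  shows "s = t"
  using assms unfolding ran_obj_def by (auto intro: extensionalityI simp: comma_objs_iff)

lemma ran_objI:
  assumes "s \<in> extensional (Comma Y)"
    and "\<And>X \<psi>. X \<in> Obj C1 \<Longrightarrow> \<psi> \<in> hom C2 (Fo X) Y \<Longrightarrow> s (X, \<psi>) \<in> Fp X"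
    and "\<And>X1 X2 \<psi>2 f. X1 \<in> Obj C1 \<Longrightarrow> X2 \<in> Obj C1 \<Longrightarrow> \<psi>2 \<in> hom C2 (Fo X2) Y \<Longrightarrow>
      f \<in> hom C1 X1 X2 \<Longrightarrow> Cmp C2 \<psi>2 (Fm f) \<in> hom C2 (Fo X1) Y \<Longrightarrow>
      res f (s (X2, \<psi>2)) = s (X1, Cmp C2 \<psi>2 (Fm f))"
  shows "s \<in> Ran Y"
  using assms unfolding ran_obj_def comma_objs_def by blast

(* The type of s is fixed so that instances of this rule supplied with using are not
   polymorphic in s; otherwise simp cannot apply them to the locale's sections. *)
lemma ran_res_apply:
  fixes s :: "'o1 \<times> 'm2 \<Rightarrow> 'v"
  shows "g \<in> hom C2 Y1 Y2 \<Longrightarrow> X \<in> Obj C1 \<Longrightarrow> \<phi> \<in> hom C2 (Fo X) Y1 \<Longrightarrow>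
    Ran_res g s (X, \<phi>) = s (X, Cmp C2 g \<phi>)"
  unfolding ran_res_def comma_objs_def by (simp add: hom_def)

lemma ran_res_in_ran_obj:
  assumes g: "g \<in> hom C2 Y1 Y2"
    and s: "s \<in> Ran Y2"
  shows "Ran_res g s \<in> Ran Y1"
proof (rule ran_objI)
  show "Ran_res g s \<in> extensional (Comma Y1)"
    using g unfolding ran_res_def hom_def by simp
  show "Ran_res g s (X, \<psi>) \<in> Fp X" if "X \<in> Obj C1" "\<psi> \<in> hom C2 (Fo X) Y1" for X \<psi>
    using ran_res_apply[OF g that] ran_obj_value[OF s that(1) comp_in_hom[OF C2_category that(2) g]] by simp
  fix X1 X2 \<psi>2 f
  assume X: "X1 \<in> Obj C1" "X2 \<in> Obj C1" and \<psi>2: "\<psi>2 \<in> hom C2 (Fo X2) Y1"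
    and f: "f \<in> hom C1 X1 X2" and \<psi>1: "Cmp C2 \<psi>2 (Fm f) \<in> hom C2 (Fo X1) Y1"
  have "Cmp C2 g (Cmp C2 \<psi>2 (Fm f)) = Cmp C2 (Cmp C2 g \<psi>2) (Fm f)"
    using comp_assoc[OF C2_category functor_hom[OF F_functor f] \<psi>2 g] .
  then show "res f (Ran_res g s (X2, \<psi>2)) = Ran_res g s (X1, Cmp C2 \<psi>2 (Fm f))"
    using ran_res_apply[OF g X(2) \<psi>2] ran_res_apply[OF g X(1) \<psi>1]
      ran_obj_compatible[OF s X comp_in_hom[OF C2_category \<psi>2 g] f] comp_in_hom[OF C2_category \<psi>1 g] by simp
qed

lemma is_presheaf_ran: "is_presheaf C2 Ran Ran_res"
  unfolding is_presheaf_def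
proof (intro conjI allI impI ballI)
  show "Ran_res f \<in> Ran Y \<rightarrow> Ran X"
    if "f \<in> hom C2 X Y" for X Y f
    using ran_res_in_ran_obj[OF that] by blast
  fix Y s assume Y: "Y \<in> Obj C2" and s: "s \<in> Ran Y"
  show "Ran_res (Idt C2 Y) s = s"
    by (rule ran_obj_eqI[OF ran_res_in_ran_obj[OF id_in_hom[OF C2_category Y] s] s])
      (simp add: ran_res_apply[OF id_in_hom[OF C2_category Y]] comp_id_left[OF C2_category])
next
  fix X Y Z f g s
  assume "f \<in> hom C2 X Y \<and> g \<in> hom C2 Y Z \<and> s \<in> Ran Z"
  then have f: "f \<in> hom C2 X Y" and g: "g \<in> hom C2 Y Z" and s: "s \<in> Ran Z"
    by blast+
  show "Ran_res (Cmp C2 g f) s = Ran_res f (Ran_res g s)"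
  proof (rule ran_obj_eqI)
    show "Ran_res (Cmp C2 g f) s \<in> Ran X"
      "Ran_res f (Ran_res g s) \<in> Ran X"
      using ran_res_in_ran_obj comp_in_hom[OF C2_category f g] f g s by blast+
    fix A \<psi> assume A: "A \<in> Obj C1" and \<psi>: "\<psi> \<in> hom C2 (Fo A) X"
    show "Ran_res (Cmp C2 g f) s (A, \<psi>) = Ran_res f (Ran_res g s) (A, \<psi>)"
      using ran_res_apply[OF comp_in_hom[OF C2_category f g] A \<psi>] ran_res_apply[OF f A \<psi>]
        ran_res_apply[OF g A comp_in_hom[OF C2_category \<psi> f]] comp_assoc[OF C2_category \<psi> f g] by simp
  qed
qed

end

locale kan_extension_of_extensive = kan_extension C1 C2 Fo Fm Fp res
  for C1 :: "('o1, 'm1) category" and C2 :: "('o2, 'm2) category"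
    and Fo :: "'o1 \<Rightarrow> 'o2" and Fm :: "'m1 \<Rightarrow> 'm2"
    and Fp :: "'o1 \<Rightarrow> 'v set" and res :: "'m1 \<Rightarrow> 'v \<Rightarrow> 'v" +
  fixes ty :: "'i itself"
  assumes inverts: "inverts_coproducts ty C1 C2 Fo Fm"
    and extensive_C2: "extensive_cat ty C2"
    and extensive_Fp: "extensive_presheaf ty C1 Fp res"
begin

lemma C1_category: "is_category C1"
  using functor_categories[OF F_functor] by blast

lemma F_fully_faithful: "fully_faithful C1 C2 Fo Fm"
  using inverts unfolding inverts_coproducts_def by blast

lemma Fp_presheaf: "is_presheaf C1 Fp res"
  using extensive_Fp unfolding extensive_presheaf_def by blast

text \<open>The value at (X, psi) of a section over the coproduct of the Ys restricting to t i on the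
  i-th summand.\<close>

definition amalgamation ::
  "'i set \<Rightarrow> ('i \<Rightarrow> 'o2) \<Rightarrow> ('i \<Rightarrow> 'm2) \<Rightarrow> ('i \<Rightarrow> 'o1 \<times> 'm2 \<Rightarrow> 'v) \<Rightarrow> 'o1 \<Rightarrow> 'm2 \<Rightarrow> 'v \<Rightarrow> bool"
  where "amalgamation I Ys \<iota> t X \<psi> u \<longleftrightarrow> u \<in> Fp X \<and>
    (\<forall>i \<in> I. \<forall>A \<rho> g. A \<in> Obj C1 \<and> \<rho> \<in> hom C2 (Fo A) (Ys i) \<and> g \<in> hom C1 A X \<and>
      Cmp C2 \<psi> (Fm g) = Cmp C2 (\<iota> i) \<rho> \<longrightarrow> res g u = t i (A, \<rho>))"

lemma amalgamation_unique:
  fixes I :: "'i set"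
  assumes cop: "is_coproduct C2 I Ys \<iota> Y" and X: "X \<in> Obj C1" and \<psi>: "\<psi> \<in> hom C2 (Fo X) Y"
    and u: "amalgamation I Ys \<iota> t X \<psi> u" and u': "amalgamation I Ys \<iota> t X \<psi> u'"
  shows "u = u'"
proof -
  obtain Xs e r where cop1: "is_coproduct C1 I Xs e X"
    and pb: "\<And>i. i \<in> I \<Longrightarrow> is_pullback C2 \<psi> (\<iota> i) (Fo (Xs i)) (Fm (e i)) (r i)"
    using extensive_pullback_decomposition[OF F_functor inverts extensive_C2 cop X \<psi>] by blast
  have "(\<lambda>i \<in> I. res (e i) u) = (\<lambda>i \<in> I. res (e i) u')"
  proof (rule restrict_ext)
    fix i assume i: "i \<in> I"
    have e: "e i \<in> hom C1 (Xs i) X" using coproduct_inj[OF cop1 i] .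
    have "r i \<in> hom C2 (Fo (Xs i)) (Ys i)" "Cmp C2 \<psi> (Fm (e i)) = Cmp C2 (\<iota> i) (r i)"
      using is_pullbackD(2,3)[OF pb[OF i] \<psi> coproduct_inj[OF cop i]] by blast+
    then have "res (e i) u = t i (Xs i, r i)" "res (e i) u' = t i (Xs i, r i)"
      using u u' i e conjunct1[OF hom_objs[OF C1_category e]] unfolding amalgamation_def by blast+
    then show "res (e i) u = res (e i) u'" by simp
  qed
  moreover have "inj_on (\<lambda>s. \<lambda>i \<in> I. res (e i) s) (Fp X)"
    using extensive_presheaf_bij[OF extensive_Fp cop1] by (rule bij_betw_imp_inj_on)
  moreover have "u \<in> Fp X" "u' \<in> Fp X"
    using u u' unfolding amalgamation_def by blast+
  ultimately show ?thesis by (blast dest: inj_onD)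
qed

lemma amalgamation_from_decomposition:
  fixes I :: "'i set"
  assumes cop: "is_coproduct C2 I Ys \<iota> Y" and \<psi>: "\<psi> \<in> hom C2 (Fo X) Y"
    and t: "t \<in> (\<Pi>\<^sub>E i \<in> I. Ran (Ys i))" and cop1: "is_coproduct C1 I Xs e X"
    and pb: "\<And>i. i \<in> I \<Longrightarrow> is_pullback C2 \<psi> (\<iota> i) (Fo (Xs i)) (Fm (e i)) (r i)"
    and u: "u \<in> Fp X" and res_e: "\<And>i. i \<in> I \<Longrightarrow> res (e i) u = t i (Xs i, r i)"
  shows "amalgamation I Ys \<iota> t X \<psi> u"
  unfolding amalgamation_def
proof (intro conjI ballI allI impI)
  show "u \<in> Fp X" by (rule u)
  fix i A \<rho> g
  assume i: "i \<in> I" and hyp: "A \<in> Obj C1 \<and> \<rho> \<in> hom C2 (Fo A) (Ys i) \<and> g \<in> hom C1 A X \<and>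
    Cmp C2 \<psi> (Fm g) = Cmp C2 (\<iota> i) \<rho>"
  then have A: "A \<in> Obj C1" and \<rho>: "\<rho> \<in> hom C2 (Fo A) (Ys i)" by blast+
  have e: "e i \<in> hom C1 (Xs i) X" using coproduct_inj[OF cop1 i] .
  have r: "r i \<in> hom C2 (Fo (Xs i)) (Ys i)"
    using is_pullbackD(2)[OF pb[OF i] \<psi> coproduct_inj[OF cop i]] .
  obtain k where k: "k \<in> hom C1 A (Xs i)" "g = Cmp C1 (e i) k" "Cmp C2 (r i) (Fm k) = \<rho>"
    using fully_faithful_pullback_factor[OF F_functor F_fully_faithful pb[OF i] \<psi>
        coproduct_inj[OF cop i] e] hyp by blast
  have "res g u = res k (t i (Xs i, r i))"
    using presheaf_res_comp[OF Fp_presheaf k(1) e u] k(2) res_e[OF i] by simp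
  also have "\<dots> = t i (A, \<rho>)"
    using ran_obj_compatible[of "t i", OF _ A conjunct1[OF hom_objs[OF C1_category e]] r k(1)]
      t i k(3) \<rho> by auto
  finally show "res g u = t i (A, \<rho>)" .
qed

lemma amalgamation_exists:
  fixes I :: "'i set"
  assumes cop: "is_coproduct C2 I Ys \<iota> Y" and X: "X \<in> Obj C1" and \<psi>: "\<psi> \<in> hom C2 (Fo X) Y"
    and t: "t \<in> (\<Pi>\<^sub>E i \<in> I. Ran (Ys i))"
  shows "\<exists>u. amalgamation I Ys \<iota> t X \<psi> u"
proof -
  obtain Xs e r where cop1: "is_coproduct C1 I Xs e X"
    and pb: "\<And>i. i \<in> I \<Longrightarrow> is_pullback C2 \<psi> (\<iota> i) (Fo (Xs i)) (Fm (e i)) (r i)"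
    using extensive_pullback_decomposition[OF F_functor inverts extensive_C2 cop X \<psi>] by blast
  have "t i (Xs i, r i) \<in> Fp (Xs i)" if "i \<in> I" for i
    using ran_obj_value[OF _ conjunct1[OF hom_objs[OF C1_category coproduct_inj[OF cop1 that]]]
        is_pullbackD(2)[OF pb[OF that] \<psi> coproduct_inj[OF cop that]]] t that by blast
  then have "(\<lambda>i \<in> I. t i (Xs i, r i)) \<in> (\<Pi>\<^sub>E i \<in> I. Fp (Xs i))"
    by (simp add: restrict_PiE_iff)
  also have "\<dots> = (\<lambda>s. \<lambda>i \<in> I. res (e i) s) ` Fp X"
    using bij_betw_imp_surj_on[OF extensive_presheaf_bij[OF extensive_Fp cop1]] by simp
  finally obtain u where u: "u \<in> Fp X" and eq: "(\<lambda>i \<in> I. t i (Xs i, r i)) = (\<lambda>i \<in> I. res (e i) u)"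
    by (rule imageE)
  have "res (e i) u = t i (Xs i, r i)" if "i \<in> I" for i
    using fun_cong[OF eq, of i] that by simp
  then show ?thesis
    using amalgamation_from_decomposition[OF cop \<psi> t cop1 pb u] by blast
qed

lemma amalgamation_res:
  assumes u: "amalgamation I Ys \<iota> t X2 \<psi> u" and \<psi>: "\<psi> \<in> hom C2 (Fo X2) Y"
    and f: "f \<in> hom C1 X1 X2"
  shows "amalgamation I Ys \<iota> t X1 (Cmp C2 \<psi> (Fm f)) (res f u)"
  unfolding amalgamation_def
proof (intro conjI ballI allI impI)
  show "res f u \<in> Fp X1"
    using presheaf_res_in[OF Fp_presheaf f] u unfolding amalgamation_def by blast
  fix i A \<rho> g
  assume i: "i \<in> I" and hyp: "A \<in> Obj C1 \<and> \<rho> \<in> hom C2 (Fo A) (Ys i) \<and> g \<in> hom C1 A X1 \<and>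
    Cmp C2 (Cmp C2 \<psi> (Fm f)) (Fm g) = Cmp C2 (\<iota> i) \<rho>"
  then have g: "g \<in> hom C1 A X1" by blast
  have "Cmp C2 \<psi> (Fm (Cmp C1 f g)) = Cmp C2 (Cmp C2 \<psi> (Fm f)) (Fm g)"
    using functor_comp[OF F_functor g f] comp_assoc[OF C2_category functor_hom[OF F_functor g] functor_hom[OF F_functor f] \<psi>]
    by simp
  then have "res (Cmp C1 f g) u = t i (A, \<rho>)"
    using u i hyp comp_in_hom[OF C1_category g f] unfolding amalgamation_def by auto
  then show "res g (res f u) = t i (A, \<rho>)"
    using presheaf_res_comp[OF Fp_presheaf g f] u unfolding amalgamation_def by simp
qed

lemma ran_obj_amalgamation:
  assumes s: "s \<in> Ran Y" and \<iota>: "\<And>i. i \<in> I \<Longrightarrow> \<iota> i \<in> hom C2 (Ys i) Y"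
    and X: "X \<in> Obj C1" and \<psi>: "\<psi> \<in> hom C2 (Fo X) Y"
  shows "amalgamation I Ys \<iota> (\<lambda>i \<in> I. Ran_res (\<iota> i) s) X \<psi> (s (X, \<psi>))"
  unfolding amalgamation_def
proof (intro conjI ballI allI impI)
  show "s (X, \<psi>) \<in> Fp X" using ran_obj_value[OF s X \<psi>] .
  fix i A \<rho> g
  assume i: "i \<in> I" and hyp: "A \<in> Obj C1 \<and> \<rho> \<in> hom C2 (Fo A) (Ys i) \<and> g \<in> hom C1 A X \<and>
    Cmp C2 \<psi> (Fm g) = Cmp C2 (\<iota> i) \<rho>"
  then have A: "A \<in> Obj C1" and \<rho>: "\<rho> \<in> hom C2 (Fo A) (Ys i)" and g: "g \<in> hom C1 A X"
    and sq: "Cmp C2 \<psi> (Fm g) = Cmp C2 (\<iota> i) \<rho>" by blast+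
  have "res g (s (X, \<psi>)) = s (A, Cmp C2 \<psi> (Fm g))"
    using ran_obj_compatible[OF s A X \<psi> g comp_in_hom[OF C2_category functor_hom[OF F_functor g] \<psi>]] .
  also have "\<dots> = Ran_res (\<iota> i) s (A, \<rho>)"
    using ran_res_apply[OF \<iota>[OF i] A \<rho>] sq by simp
  finally show "res g (s (X, \<psi>)) = (\<lambda>i \<in> I. Ran_res (\<iota> i) s) i (A, \<rho>)"
    using i by simp
qed

lemma amalgamation_at_summand:
  assumes u: "amalgamation I Ys \<iota> t A (Cmp C2 (\<iota> i) \<rho>) u" and i: "i \<in> I"
    and \<iota>: "\<iota> i \<in> hom C2 (Ys i) Y" and A: "A \<in> Obj C1" and \<rho>: "\<rho> \<in> hom C2 (Fo A) (Ys i)"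
  shows "u = t i (A, \<rho>)"
proof -
  have "Cmp C2 (Cmp C2 (\<iota> i) \<rho>) (Fm (Idt C1 A)) = Cmp C2 (\<iota> i) \<rho>"
    using functor_id[OF F_functor A] comp_id_right[OF C2_category comp_in_hom[OF C2_category \<rho> \<iota>]] by simp
  then have "res (Idt C1 A) u = t i (A, \<rho>)"
    using u i A \<rho> id_in_hom[OF C1_category A] unfolding amalgamation_def by blast
  then show ?thesis
    using presheaf_res_id[OF Fp_presheaf A] u unfolding amalgamation_def by simp
qed

definition glued_section ::
  "'i set \<Rightarrow> ('i \<Rightarrow> 'o2) \<Rightarrow> ('i \<Rightarrow> 'm2) \<Rightarrow> ('i \<Rightarrow> 'o1 \<times> 'm2 \<Rightarrow> 'v) \<Rightarrow> 'o2 \<Rightarrow> 'o1 \<times> 'm2 \<Rightarrow> 'v"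
  where "glued_section I Ys \<iota> t Y = (\<lambda>(X, \<psi>) \<in> Comma Y. THE u. amalgamation I Ys \<iota> t X \<psi> u)"

lemma glued_section_amalgamation:
  fixes I :: "'i set"
  assumes cop: "is_coproduct C2 I Ys \<iota> Y" and t: "t \<in> (\<Pi>\<^sub>E i \<in> I. Ran (Ys i))"
    and X: "X \<in> Obj C1" and \<psi>: "\<psi> \<in> hom C2 (Fo X) Y"
  shows "amalgamation I Ys \<iota> t X \<psi> (glued_section I Ys \<iota> t Y (X, \<psi>))"
proof -
  have "\<exists>!u. amalgamation I Ys \<iota> t X \<psi> u"
    using amalgamation_exists[OF cop X \<psi> t] amalgamation_unique[OF cop X \<psi>] by blast
  then show ?thesis
    using X \<psi> unfolding glued_section_def by (simp add: comma_objs_iff theI')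
qed

lemma glued_section_in_Ran:
  fixes I :: "'i set"
  assumes cop: "is_coproduct C2 I Ys \<iota> Y" and t: "t \<in> (\<Pi>\<^sub>E i \<in> I. Ran (Ys i))"
  shows "glued_section I Ys \<iota> t Y \<in> Ran Y"
proof (rule ran_objI)
  show "glued_section I Ys \<iota> t Y \<in> extensional (Comma Y)"
    unfolding glued_section_def by simp
  show "glued_section I Ys \<iota> t Y (X, \<psi>) \<in> Fp X" if "X \<in> Obj C1" "\<psi> \<in> hom C2 (Fo X) Y" for X \<psi>
    using glued_section_amalgamation[OF cop t that] unfolding amalgamation_def by blast
  fix X1 X2 \<psi>2 f
  assume X: "X1 \<in> Obj C1" "X2 \<in> Obj C1" and \<psi>2: "\<psi>2 \<in> hom C2 (Fo X2) Y"
    and f: "f \<in> hom C1 X1 X2" and \<psi>1: "Cmp C2 \<psi>2 (Fm f) \<in> hom C2 (Fo X1) Y"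
  show "res f (glued_section I Ys \<iota> t Y (X2, \<psi>2)) = glued_section I Ys \<iota> t Y (X1, Cmp C2 \<psi>2 (Fm f))"
    by (rule amalgamation_unique[OF cop X(1) \<psi>1
          amalgamation_res[OF glued_section_amalgamation[OF cop t X(2) \<psi>2] \<psi>2 f]
          glued_section_amalgamation[OF cop t X(1) \<psi>1]])
qed

lemma restrict_glued_section:
  fixes I :: "'i set"
  assumes cop: "is_coproduct C2 I Ys \<iota> Y" and t: "t \<in> (\<Pi>\<^sub>E i \<in> I. Ran (Ys i))"
  shows "(\<lambda>i \<in> I. Ran_res (\<iota> i) (glued_section I Ys \<iota> t Y)) = t"
proof
  fix i
  show "(\<lambda>i \<in> I. Ran_res (\<iota> i) (glued_section I Ys \<iota> t Y)) i = t i"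
  proof (cases "i \<in> I")
    case False
    then show ?thesis using PiE_arb[OF t False] by simp
  next
    case i: True
    have \<iota>: "\<iota> i \<in> hom C2 (Ys i) Y" using coproduct_inj[OF cop i] .
    have "Ran_res (\<iota> i) (glued_section I Ys \<iota> t Y) = t i"
    proof (rule ran_obj_eqI)
      show "Ran_res (\<iota> i) (glued_section I Ys \<iota> t Y) \<in> Ran (Ys i)"
        using ran_res_in_ran_obj[OF \<iota> glued_section_in_Ran[OF cop t]] .
      show "t i \<in> Ran (Ys i)" using t i by blast
      fix A \<rho> assume A: "A \<in> Obj C1" and \<rho>: "\<rho> \<in> hom C2 (Fo A) (Ys i)"
      have am: "amalgamation I Ys \<iota> t A (Cmp C2 (\<iota> i) \<rho>) (glued_section I Ys \<iota> t Y (A, Cmp C2 (\<iota> i) \<rho>))"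
        using glued_section_amalgamation[OF cop t A comp_in_hom[OF C2_category \<rho> \<iota>]] .
      show "Ran_res (\<iota> i) (glued_section I Ys \<iota> t Y) (A, \<rho>) = t i (A, \<rho>)"
        using amalgamation_at_summand[OF am i \<iota> A \<rho>] ran_res_apply[OF \<iota> A \<rho>] by simp
    qed
    then show ?thesis using i by simp
  qed
qed

lemma ran_restrictions_bij:
  fixes I :: "'i set"
  assumes cop: "is_coproduct C2 I Ys \<iota> Y"
  shows "bij_betw (\<lambda>s. \<lambda>i \<in> I. Ran_res (\<iota> i) s) (Ran Y) (\<Pi>\<^sub>E i \<in> I. Ran (Ys i))"
  unfolding bij_betw_def
proof (intro conjI inj_onI equalityI subsetI)
  have \<iota>: "\<And>i. i \<in> I \<Longrightarrow> \<iota> i \<in> hom C2 (Ys i) Y" using coproduct_inj[OF cop] .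
  fix s s' assume s: "s \<in> Ran Y" and s': "s' \<in> Ran Y"
    and eq: "(\<lambda>i \<in> I. Ran_res (\<iota> i) s) = (\<lambda>i \<in> I. Ran_res (\<iota> i) s')"
  show "s = s'"
  proof (rule ran_obj_eqI[OF s s'])
    fix X \<psi> assume X: "X \<in> Obj C1" and \<psi>: "\<psi> \<in> hom C2 (Fo X) Y"
    have "amalgamation I Ys \<iota> (\<lambda>i \<in> I. Ran_res (\<iota> i) s) X \<psi> (s' (X, \<psi>))"
      unfolding eq by (rule ran_obj_amalgamation[OF s' \<iota> X \<psi>])
    with amalgamation_unique[OF cop X \<psi> ran_obj_amalgamation[OF s \<iota> X \<psi>]]
    show "s (X, \<psi>) = s' (X, \<psi>)" by blast
  qed
next
  fix t assume "t \<in> (\<lambda>s. \<lambda>i \<in> I. Ran_res (\<iota> i) s) ` Ran Y"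
  then obtain s where s: "s \<in> Ran Y" and t: "t = (\<lambda>i \<in> I. Ran_res (\<iota> i) s)" by blast
  show "t \<in> (\<Pi>\<^sub>E i \<in> I. Ran (Ys i))"
    unfolding t using ran_res_in_ran_obj[OF coproduct_inj[OF cop] s] by (simp add: restrict_PiE_iff)
next
  fix t assume t: "t \<in> (\<Pi>\<^sub>E i \<in> I. Ran (Ys i))"
  show "t \<in> (\<lambda>s. \<lambda>i \<in> I. Ran_res (\<iota> i) s) ` Ran Y"
    using restrict_glued_section[OF cop t, symmetric] glued_section_in_Ran[OF cop t] by (rule image_eqI)
qed

lemma extensive_presheaf_Ran: "extensive_presheaf ty C2 Ran Ran_res"
  unfolding extensive_presheaf_def using is_presheaf_ran ran_restrictions_bij by blast

end

theorem mainTheorem3: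
  fixes C1 :: "('o1, 'm1) category" and C2 :: "('o2, 'm2) category"
    and Fo :: "'o1 \<Rightarrow> 'o2" and Fm :: "'m1 \<Rightarrow> 'm2"
    and Fp :: "'o1 \<Rightarrow> 'v set" and res :: "'m1 \<Rightarrow> 'v \<Rightarrow> 'v"
  assumes "is_functor C1 C2 Fo Fm"
    and "inverts_coproducts TYPE('i) C1 C2 Fo Fm"
    and "extensive_cat TYPE('i) C2"
    and "extensive_presheaf TYPE('i) C1 Fp res"
  shows "extensive_presheaf TYPE('i) C2 (ran_obj C1 C2 Fo Fm Fp res) (ran_res C1 C2 Fo)"
proof -
  interpret kan_extension_of_extensive C1 C2 Fo Fm Fp res "TYPE('i)"
    using assms by unfold_locales
  show ?thesis by (rule extensive_presheaf_Ran)
qed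

end
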